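(* For every positive integer $n$, let $\rho(n)$ denote the maximum number of runs in a binary word of length $n$. Then the limit $\lim_{n\to\infty}\rho(n)/n$ exists (as a finite real number).
   Context: Words are finite sequences $w=w[1]w[2]\cdots w[n]$ over the binary alphabet $\{0,1\}$, $|w|=n$, and $w[i..j]=w[i]w[i+1]\cdots w[j]$. An integer $p\ge 1$ is a period of $w$ if $w[i+p]=w[i]$ for all $1\le i\le |w|-p$; the period of $w$ is its least period. A run of $w$ is an integer interval $[i..j]$ with $1\le i<j\le |w|$ such that, with $p$ the least period of $w[i..j]$, we have $j-i+1\ge 2p$, and either $i=1$ or $w[i-1]\neq w[i-1+p]$, and either $j=|w|$ or $w[j+1]\ne w[j+1-p]$. *)

theory Defs
  imports Complex_Main
begin

text \<open>Binary words are lists over bool. Positions are 1-based: letter w[i] is w ! (i - 1).\<close>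

definition letter :: "bool list \<Rightarrow> nat \<Rightarrow> bool" where
  "letter w i = w ! (i - 1)"

definition factor :: "bool list \<Rightarrow> nat \<Rightarrow> nat \<Rightarrow> bool list" where
  "factor w i j = take (j + 1 - i) (drop (i - 1) w)"

definition is_period :: "bool list \<Rightarrow> nat \<Rightarrow> bool" where
  "is_period w p \<longleftrightarrow> p \<ge> 1 \<and> (\<forall>i. 1 \<le> i \<and> i \<le> length w - p \<longrightarrow> letter w (i + p) = letter w i)"

definition least_period :: "bool list \<Rightarrow> nat" where
  "least_period w = (LEAST p. is_period w p)"

definition is_run :: "bool list \<Rightarrow> nat \<Rightarrow> nat \<Rightarrow> bool" where
  "is_run w i j \<longleftrightarrow>
     1 \<le> i \<and> i < j \<and> j \<le> length w \<and>
     (let p = least_period (factor w i j) in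
        j - i + 1 \<ge> 2 * p \<and>
        (i = 1 \<or> letter w (i - 1) \<noteq> letter w (i - 1 + p)) \<and>
        (j = length w \<or> letter w (j + 1) \<noteq> letter w (j + 1 - p)))"

definition runs :: "bool list \<Rightarrow> (nat \<times> nat) set" where
  "runs w = {(i, j). is_run w i j}"

definition rho :: "nat \<Rightarrow> nat" where
  "rho n = Max ((\<lambda>w. card (runs w)) ` {w :: bool list. length w = n})"

end

theory Submission
  imports Defs "HOL-Library.List_Lexorder"
begin

(* Two estimates make rho(n)/n converge.

   Linear bound rho(n) <= 2n: take a run of least period p and order the alphabet so that the
   letter following the run is smaller than the letter p positions before it. The least rotation
   of its period is a Lyndon word occurring at some position a inside the first period, and it is
   the longest Lyndon factor starting at a, since any longer factor is lexicographically larger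
   than its suffix shifted by p. So the position a together with the choice of order determines
   the run.

   Near superadditivity rho(a) + rho(b) <= rho(a + b) + log2 b: every run of v or of w extends to
   a run of vw with the same period, and a run of vw extending runs of both factors straddles the
   border with two periods on each side. The periods of such straddling runs at least double one
   another, so there are at most log2 |w| of them.

   A Fekete-type argument for superadditive sequences with a sublinear error term then gives the
   limit sup_n (rho(n) - log2 n) / n. *)

lemma card_le_card_if_injective_relation:
  assumes "finite B" and total: "\<And>x. x \<in> A \<Longrightarrow> \<exists>y\<in>B. R x y"
    and injective: "\<And>x x' y. x \<in> A \<Longrightarrow> x' \<in> A \<Longrightarrow> R x y \<Longrightarrow> R x' y \<Longrightarrow> x = x'"
  shows "card A \<le> card B"
proof -
  define f where "f x = (SOME y. y \<in> B \<and> R x y)" for x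
  have f: "f x \<in> B \<and> R x (f x)" if "x \<in> A" for x
    using someI_ex[OF total[OF that, unfolded Bex_def]] unfolding f_def .
  have "inj_on f A" using f injective by (metis inj_onI)
  moreover have "f ` A \<subseteq> B" using f by blast
  ultimately show ?thesis using card_inj_on_le \<open>finite B\<close> by blast
qed

section \<open>Lyndon words and rotations\<close>

lemma less_append_same_length:
  fixes u v :: "'a::order list"
  assumes "length u = length v" "u < v"
  shows "u @ x < v @ y"
  using assms lexord_sufI[of u v] by (simp add: list_less_def)

lemma less_of_append_less_same_length:
  fixes u v :: "'a::linorder list"
  assumes "length u = length v" "u @ x < v @ y" "u \<noteq> v"
  shows "u < v"
  by (metis assms less_append_same_length less_not_sym linorder_neqE)

lemma append_less_append_iff:
  fixes zs :: "'a::order list"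
  shows "zs @ x < zs @ y \<longleftrightarrow> x < y"
  by (simp add: list_less_def irrefl_def)

definition lyndon :: "'a::linorder list \<Rightarrow> bool" where
  "lyndon w \<longleftrightarrow> (\<forall>k. 0 < k \<longrightarrow> k < length w \<longrightarrow> w < drop k w)"

definition primitive :: "'a list \<Rightarrow> bool" where
  "primitive w \<longleftrightarrow> (\<forall>r. 0 < r \<longrightarrow> r < length w \<longrightarrow> rotate r w \<noteq> w)"

lemma inj_rotate: "inj (rotate n)"
  unfolding rotate_def by (intro inj_fn inj_rotate1)

lemma primitive_rotate:
  assumes "primitive w"
  shows "primitive (rotate k w)"
  unfolding primitive_def
proof (intro allI impI notI)
  fix r assume r: "0 < r" "r < length (rotate k w)" and fix_r: "rotate r (rotate k w) = rotate k w"
  have "rotate k (rotate r w) = rotate k w"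
    using fix_r by (simp add: rotate_rotate add.commute)
  then have "rotate r w = w" using inj_rotate by (auto dest: injD)
  with assms r show False by (simp add: primitive_def)
qed

lemma lyndon_if_least_rotation:
  fixes w :: "'a::linorder list"
  assumes prim: "primitive w" and least: "\<And>r. r < length w \<Longrightarrow> w \<le> rotate r w"
  shows "lyndon w"
  unfolding lyndon_def
proof (intro allI impI)
  fix k assume k: "0 < k" "k < length w"
  define m where "m = length w - k"
  have "0 < m" "m < length w" using k by (auto simp: m_def)
  have "w < rotate k w" "w < rotate m w"
    using prim least[of k] least[of m] k \<open>0 < m\<close> \<open>m < length w\<close>
    unfolding primitive_def by (metis order.not_eq_order_implies_strict)+
  then have less_k: "take m w @ drop m w < drop k w @ take k w"
    and less_m: "take k w @ drop k w < drop m w @ take m w"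
    using k by (simp_all add: rotate_drop_take m_def)
  have len: "length (take m w) = length (drop k w)" "length (take k w) = length (drop m w)"
    using k by (auto simp: m_def)
  show "w < drop k w"
  proof (cases "take m w = drop k w")
    case True
    \<comment> \<open>impossible: the rotations by k and by m compare take k w and drop m w both ways\<close>
    have "drop m w < take k w"
      using less_k True by (simp add: append_less_append_iff)
    moreover have "take k w < drop m w"
    proof (rule less_of_append_less_same_length[OF len(2)])
      show "take k w @ drop k w < drop m w @ drop k w" using less_m True by simp
      then show "take k w \<noteq> drop m w" by (metis less_irrefl)
    qed
    ultimately show ?thesis by (meson less_not_sym)
  next
    case False
    then have "take m w < drop k w"
      using less_k len(1) less_of_append_less_same_length by blast
    then show ?thesis
      using less_append_same_length[OF len(1), of "drop m w" "[]"] by simp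
  qed
qed

lemma lyndon_rotation_exists:
  fixes w :: "'a::linorder list"
  assumes "primitive w" "w \<noteq> []"
  shows "\<exists>r < length w. lyndon (rotate r w)"
proof -
  define R where "R = (\<lambda>r. rotate r w) ` {..<length w}"
  have "finite R" unfolding R_def by simp
  have "R \<noteq> {}" using assms(2) unfolding R_def by auto
  have "Min R \<in> R" using \<open>finite R\<close> \<open>R \<noteq> {}\<close> by (rule Min_in)
  then obtain r0 where r0: "r0 < length w" "rotate r0 w = Min R"
    unfolding R_def by (auto simp del: rotate_id)
  have "rotate r0 w \<le> rotate r (rotate r0 w)" if "r < length w" for r
  proof -
    have "rotate r (rotate r0 w) = rotate ((r + r0) mod length w) w"
      by (metis rotate_conv_mod rotate_rotate)
    moreover have "rotate ((r + r0) mod length w) w \<in> R"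
      using assms(2) unfolding R_def by simp
    ultimately show ?thesis using r0(2) Min_le[OF \<open>finite R\<close>] by metis
  qed
  then have "lyndon (rotate r0 w)"
    by (intro lyndon_if_least_rotation primitive_rotate[OF assms(1)]) simp
  with r0(1) show ?thesis by blast
qed

section \<open>Local periods\<close>

definition periodic_on :: "'a list \<Rightarrow> nat \<Rightarrow> nat \<Rightarrow> nat \<Rightarrow> bool" where
  "periodic_on u s e q \<longleftrightarrow> (\<forall>x. s \<le> x \<longrightarrow> x + q \<le> e \<longrightarrow> u ! (x + q) = u ! x)"

lemma periodic_on_mono:
  "periodic_on u s e q \<Longrightarrow> s \<le> s' \<Longrightarrow> e' \<le> e \<Longrightarrow> periodic_on u s' e' q"
  unfolding periodic_on_def by auto

lemma periodic_on_multiple: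
  assumes "periodic_on u s e q" "s \<le> x" "x + k * q \<le> e"
  shows "u ! (x + k * q) = u ! x"
  using assms(3)
proof (induction k)
  case (Suc k)
  have "s \<le> x + k * q" "x + k * q + q \<le> e" using Suc.prems assms(2) by auto
  then have "u ! (x + k * q + q) = u ! (x + k * q)"
    using assms(1) unfolding periodic_on_def by blast
  with Suc show ?case by (simp add: add.assoc add.commute add.left_commute)
qed simp

lemma periodic_on_mod:
  assumes "periodic_on u s e q" "s \<le> x" "x \<le> e" "s \<le> y" "y \<le> e" "x mod q = y mod q"
  shows "u ! x = u ! y"
proof -
  have "u ! x = u ! y" if "s \<le> x" "x \<le> y" "y \<le> e" "x mod q = y mod q" for x y
  proof -
    have "q dvd (y - x)" using that mod_eq_dvd_iff_nat[of x y q] by simp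
    then obtain k where "y - x = k * q" by (metis dvd_def mult.commute)
    then have "y = x + k * q" using that by simp
    then show ?thesis using periodic_on_multiple[OF assms(1) that(1)] that by simp
  qed
  then show ?thesis using assms(2-6) by (metis nle_le)
qed

text \<open>A weak form of the Fine--Wilf theorem.\<close>
lemma periodic_on_propagate:
  assumes q: "periodic_on u s e q" "1 \<le> q" and d: "periodic_on u b c d"
    and "s \<le> b" "c \<le> e" "q + d \<le> c + 1 - b"
  shows "periodic_on u s e d"
  unfolding periodic_on_def
proof (intro allI impI)
  fix x assume x: "s \<le> x" "x + d \<le> e"
  define x' where "x' = b + (x + q * b - b) mod q"
  have "b \<le> x + q * b" using \<open>1 \<le> q\<close> by (simp add: trans_le_add2)
  then have "x' mod q = x mod q"
    unfolding x'_def by (simp add: mod_add_right_eq)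
  then have "(x' + d) mod q = (x + d) mod q" by (metis mod_add_left_eq)
  have "(x + q * b - b) mod q < q" using \<open>1 \<le> q\<close> by simp
  then have x': "b \<le> x'" "x' + d \<le> c" using assms(6) unfolding x'_def by auto
  have "u ! x = u ! x'"
    by (rule periodic_on_mod[OF q(1)]) (use \<open>x' mod q = x mod q\<close> x x' assms(4,5) in auto)
  moreover have "u ! (x + d) = u ! (x' + d)"
    by (rule periodic_on_mod[OF q(1)])
      (use \<open>(x' + d) mod q = (x + d) mod q\<close> x x' assms(4,5) in auto)
  moreover have "u ! (x' + d) = u ! x'" using d x' unfolding periodic_on_def by auto
  ultimately show "u ! (x + d) = u ! x" by simp
qed

lemma periodic_on_append_left:
  "e < length v \<Longrightarrow> periodic_on (v @ w) s e q \<longleftrightarrow> periodic_on v s e q"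
  unfolding periodic_on_def by (auto simp: nth_append)

lemma periodic_on_append_right:
  "periodic_on (v @ w) (length v + s) (length v + e) q \<longleftrightarrow> periodic_on w s e q"
  unfolding periodic_on_def
proof (intro iffI allI impI)
  fix x assume "\<forall>x. length v + s \<le> x \<longrightarrow> x + q \<le> length v + e \<longrightarrow> (v @ w) ! (x + q) = (v @ w) ! x"
    and "s \<le> x" "x + q \<le> e"
  then have "(v @ w) ! (length v + x + q) = (v @ w) ! (length v + x)" by simp
  then show "w ! (x + q) = w ! x" by (metis add.assoc nth_append_length_plus)
next
  fix x assume per: "\<forall>x. s \<le> x \<longrightarrow> x + q \<le> e \<longrightarrow> w ! (x + q) = w ! x"
    and x: "length v + s \<le> x" "x + q \<le> length v + e"
  define y where "y = x - length v"
  have xy: "x = length v + y" using x unfolding y_def by simp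
  have "w ! (y + q) = w ! y" using per x xy by auto
  then show "(v @ w) ! (x + q) = (v @ w) ! x" using xy by (metis add.assoc nth_append_length_plus)
qed

lemma periodic_on_map_inj:
  "inj f \<Longrightarrow> e < length u \<Longrightarrow> periodic_on (map f u) s e q \<longleftrightarrow> periodic_on u s e q"
  unfolding periodic_on_def by (auto dest: injD)

lemma periodic_on_union:
  assumes "periodic_on u s1 e1 p" "periodic_on u s2 e2 p" "s1 \<le> s2" "s2 + p \<le> e1"
  shows "periodic_on u s1 (max e1 e2) p"
  unfolding periodic_on_def
proof (intro allI impI)
  fix x assume x: "s1 \<le> x" "x + p \<le> max e1 e2"
  show "u ! (x + p) = u ! x"
  proof (cases "x + p \<le> e1")
    case True then show ?thesis using assms(1) x(1) unfolding periodic_on_def by blast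
  next
    case False
    then have "s2 \<le> x" "x + p \<le> e2" using assms(4) x(2) by auto
    then show ?thesis using assms(2) unfolding periodic_on_def by blast
  qed
qed

lemma periodic_on_extend_left:
  assumes "periodic_on u s e p"
  obtains s' where "s' \<le> s" "periodic_on u s' e p" "s' = 0 \<or> u ! (s' - 1) \<noteq> u ! (s' - 1 + p)"
proof
  define s' where "s' = (LEAST x. periodic_on u x e p)"
  show "s' \<le> s" "periodic_on u s' e p"
    unfolding s'_def using assms by (auto intro: Least_le LeastI)
  show "s' = 0 \<or> u ! (s' - 1) \<noteq> u ! (s' - 1 + p)"
  proof (rule ccontr)
    assume contra: "\<not> (s' = 0 \<or> u ! (s' - 1) \<noteq> u ! (s' - 1 + p))"
    have "periodic_on u (s' - 1) e p"
      unfolding periodic_on_def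
    proof (intro allI impI)
      fix x assume "s' - 1 \<le> x" "x + p \<le> e"
      then consider "x = s' - 1" | "s' \<le> x" by linarith
      then show "u ! (x + p) = u ! x"
        using contra \<open>periodic_on u s' e p\<close> \<open>x + p \<le> e\<close> unfolding periodic_on_def by cases auto
    qed
    moreover have "s' - 1 < s'" using contra by simp
    ultimately show False unfolding s'_def using not_less_Least by blast
  qed
qed

lemma periodic_on_extend_right:
  assumes "periodic_on u s e p" "e < length u"
  obtains e' where "e \<le> e'" "e' < length u" "periodic_on u s e' p"
    "e' + 1 = length u \<or> u ! (e' + 1) \<noteq> u ! (e' + 1 - p)"
proof
  define E where "E = {y. y < length u \<and> periodic_on u s y p}"
  define e' where "e' = Max E"
  have "finite E" "e \<in> E" using assms unfolding E_def by auto
  then have "e' \<in> E" "e \<le> e'" unfolding e'_def using Max_in Max_ge by blast+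
  then show "e \<le> e'" "e' < length u" "periodic_on u s e' p" unfolding E_def by auto
  show "e' + 1 = length u \<or> u ! (e' + 1) \<noteq> u ! (e' + 1 - p)"
  proof (rule ccontr)
    assume contra: "\<not> (e' + 1 = length u \<or> u ! (e' + 1) \<noteq> u ! (e' + 1 - p))"
    have "periodic_on u s (e' + 1) p"
      unfolding periodic_on_def
    proof (intro allI impI)
      fix x assume "s \<le> x" "x + p \<le> e' + 1"
      then consider "x = e' + 1 - p" "x + p = e' + 1" | "x + p \<le> e'" by linarith
      then show "u ! (x + p) = u ! x"
        using contra \<open>periodic_on u s e' p\<close> \<open>s \<le> x\<close> unfolding periodic_on_def
        by cases auto
    qed
    then have "e' + 1 \<in> E" using \<open>e' < length u\<close> contra unfolding E_def by auto
    then show False using Max_ge[OF \<open>finite E\<close>] unfolding e'_def by fastforce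
  qed
qed

section \<open>Runs\<close>

text \<open>Runs with 0-based inclusive positions s..e and their least period p made explicit.\<close>

definition run0 :: "'a list \<Rightarrow> nat \<Rightarrow> nat \<Rightarrow> nat \<Rightarrow> bool" where
  "run0 u s e p \<longleftrightarrow> 1 \<le> p \<and> s + 2 * p \<le> e + 1 \<and> e < length u \<and> periodic_on u s e p \<and>
     (\<forall>q. 1 \<le> q \<longrightarrow> q < p \<longrightarrow> \<not> periodic_on u s e q) \<and>
     (s = 0 \<or> u ! (s - 1) \<noteq> u ! (s - 1 + p)) \<and> (e + 1 = length u \<or> u ! (e + 1) \<noteq> u ! (e + 1 - p))"

definition runs0 :: "'a list \<Rightarrow> (nat \<times> nat) set" where
  "runs0 u = {(s, e). \<exists>p. run0 u s e p}"

lemma run0D: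
  assumes "run0 u s e p"
  shows "1 \<le> p" "s + 2 * p \<le> e + 1" "e < length u" "periodic_on u s e p"
    "\<And>q. 1 \<le> q \<Longrightarrow> q < p \<Longrightarrow> \<not> periodic_on u s e q"
  using assms unfolding run0_def by auto

lemma run0_period_unique: "run0 u s e p \<Longrightarrow> run0 u s e p' \<Longrightarrow> p = p'"
  unfolding run0_def by (metis linorder_neqE_nat)

lemma finite_runs0: "finite (runs0 u)"
proof (rule finite_subset)
  show "runs0 u \<subseteq> {..<length u} \<times> {..<length u}"
    unfolding runs0_def run0_def by auto
qed auto

lemma run0_maximal:
  assumes run: "run0 u s e p" and per: "periodic_on u s' e' p"
    and "s' \<le> s" "e \<le> e'" "e' < length u"
  shows "s' = s \<and> e' = e"
proof -
  note r = run0D[OF run]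
  have "\<not> s' < s"
  proof
    assume "s' < s"
    then have "s' \<le> s - 1" "s - 1 + p \<le> e'" using r(1,2) \<open>e \<le> e'\<close> by auto
    then have "u ! (s - 1 + p) = u ! (s - 1)" using per unfolding periodic_on_def by blast
    with \<open>s' < s\<close> run show False unfolding run0_def by auto
  qed
  moreover have "\<not> e < e'"
  proof
    assume "e < e'"
    then have "s' \<le> e + 1 - p" "e + 1 - p + p \<le> e'" using r(2) \<open>s' \<le> s\<close> by auto
    then have "u ! (e + 1 - p + p) = u ! (e + 1 - p)" using per unfolding periodic_on_def by blast
    moreover have "e + 1 - p + p = e + 1" using r(2) by simp
    ultimately show False using \<open>e < e'\<close> \<open>e' < length u\<close> run unfolding run0_def by auto
  qed
  ultimately show ?thesis using assms(3,4) by simp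
qed

lemma run0_overlap_eq:
  assumes "run0 u s1 e1 p" "run0 u s2 e2 p"
    and "s1 \<le> x" "s2 \<le> x" "x + p \<le> e1" "x + p \<le> e2"
  shows "s1 = s2 \<and> e1 = e2"
proof -
  have *: "s1 = s2 \<and> e1 = e2"
    if "run0 u s1 e1 p" "run0 u s2 e2 p" "s1 \<le> s2" "s2 + p \<le> e1" for s1 e1 s2 e2
  proof -
    have "periodic_on u s1 (max e1 e2) p"
      using periodic_on_union run0D(4)[OF that(1)] run0D(4)[OF that(2)] that(3,4) by blast
    moreover have "max e1 e2 < length u" using run0D(3)[OF that(1)] run0D(3)[OF that(2)] by simp
    ultimately show ?thesis
      using run0_maximal[OF that(1), of s1 "max e1 e2"] run0_maximal[OF that(2), of s1 "max e1 e2"]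
        that(3) by auto
  qed
  show ?thesis
  proof (cases "s1 \<le> s2")
    case True then show ?thesis using *[OF assms(1,2)] assms(4,5) by simp
  next
    case False then show ?thesis using *[OF assms(2,1)] assms(3,6) by simp
  qed
qed

lemma run0_map_inj: "inj f \<Longrightarrow> run0 (map f u) s e p \<longleftrightarrow> run0 u s e p"
  unfolding run0_def by (auto simp: periodic_on_map_inj inj_eq)

lemma run0_extend:
  assumes per: "periodic_on u s e p" and "1 \<le> p" "s + 2 * p \<le> e + 1" "e < length u"
    and least: "\<And>q. 1 \<le> q \<Longrightarrow> q < p \<Longrightarrow> \<not> periodic_on u s e q"
  obtains s' e' where "s' \<le> s" "e \<le> e'" "run0 u s' e' p"
proof -
  obtain s' where s': "s' \<le> s" "periodic_on u s' e p" "s' = 0 \<or> u ! (s' - 1) \<noteq> u ! (s' - 1 + p)"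
    using periodic_on_extend_left[OF per] by blast
  obtain e' where e': "e \<le> e'" "e' < length u" "periodic_on u s' e' p"
    "e' + 1 = length u \<or> u ! (e' + 1) \<noteq> u ! (e' + 1 - p)"
    using periodic_on_extend_right[OF s'(2) \<open>e < length u\<close>] by blast
  have "\<not> periodic_on u s' e' q" if "1 \<le> q" "q < p" for q
    using least[OF that] periodic_on_mono s'(1) e'(1) by blast
  then have "run0 u s' e' p"
    unfolding run0_def using assms(2,3) s' e' by auto
  with s'(1) e'(1) show ?thesis by (rule that)
qed

lemma run0_append_right:
  assumes run: "run0 v s e p"
  obtains e' where "run0 (v @ w) s e' p"
proof -
  note r = run0D[OF run]
  have "periodic_on (v @ w) s e p" "\<And>q. 1 \<le> q \<Longrightarrow> q < p \<Longrightarrow> \<not> periodic_on (v @ w) s e q"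
    using r periodic_on_append_left by blast+
  then obtain s' e' where se: "s' \<le> s" "e \<le> e'" "run0 (v @ w) s' e' p"
    using run0_extend[of "v @ w" s e p] r by auto
  have "periodic_on v s' (min e' (length v - 1)) p"
    using periodic_on_mono[OF run0D(4)[OF se(3)], of s' "min e' (length v - 1)"]
      periodic_on_append_left[of "min e' (length v - 1)" v w] r(3) by simp
  then have "s' = s" using run0_maximal[OF run] se r(3) by auto
  with se show ?thesis using that by blast
qed

lemma run0_append_left:
  assumes run: "run0 w s e p"
  obtains s' where "run0 (v @ w) s' (length v + e) p"
proof -
  note r = run0D[OF run]
  have "periodic_on (v @ w) (length v + s) (length v + e) p"
    "\<And>q. 1 \<le> q \<Longrightarrow> q < p \<Longrightarrow> \<not> periodic_on (v @ w) (length v + s) (length v + e) q"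
    using r periodic_on_append_right by blast+
  then obtain s' e' where se: "s' \<le> length v + s" "length v + e \<le> e'" "run0 (v @ w) s' e' p"
    using run0_extend[of "v @ w" "length v + s" "length v + e" p] r by auto
  have "periodic_on (v @ w) (length v + s) (length v + (e' - length v)) p"
    using periodic_on_mono[OF run0D(4)[OF se(3)], of "length v + s" e'] se by simp
  then have "periodic_on w s (e' - length v) p" by (simp only: periodic_on_append_right)
  moreover have "e \<le> e' - length v" "e' - length v < length w"
    using se(2) run0D(3)[OF se(3)] by auto
  ultimately have "e' - length v = e" using run0_maximal[OF run] by blast
  then have "e' = length v + e" using se(2) by simp
  with se show ?thesis using that by blast
qed

section \<open>Lyndon roots and the linear bound\<close>

definition window :: "'a list \<Rightarrow> nat \<Rightarrow> nat \<Rightarrow> 'a list" where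
  "window u a l = take l (drop a u)"

lemma length_window: "a + l \<le> length u \<Longrightarrow> length (window u a l) = l"
  by (simp add: window_def)

lemma nth_window: "t < l \<Longrightarrow> a + l \<le> length u \<Longrightarrow> window u a l ! t = u ! (a + t)"
  by (simp add: window_def)

lemma drop_window: "drop k (window u a l) = window u (a + k) (l - k)"
  by (simp add: window_def drop_take add.commute)

lemma window_add: "window u a (l + m) = window u a l @ window u (a + l) m"
  by (simp add: window_def take_add add.commute)

lemma window_split:
  assumes "t < l" "a + l \<le> length u"
  shows "window u a l = window u a t @ u ! (a + t) # window u (a + t + 1) (l - t - 1)"
proof -
  have "drop (a + t) u = u ! (a + t) # drop (a + t + 1) u"
    using assms by (simp add: Cons_nth_drop_Suc)
  then have "window u (a + t) (Suc (l - t - 1)) = u ! (a + t) # window u (a + t + 1) (l - t - 1)"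
    by (simp add: window_def)
  then show ?thesis
    using window_add[of u a t "Suc (l - t - 1)"] assms(1) by simp
qed

lemma window_shift_period:
  assumes "periodic_on u s e p" "s \<le> a" "a + t + p \<le> e + 1" "e < length u"
  shows "window u (a + p) t = window u a t"
proof (rule nth_equalityI)
  show "length (window u (a + p) t) = length (window u a t)"
    using assms(3,4) by (simp add: length_window)
  fix i assume "i < length (window u (a + p) t)"
  then have "i < t" using assms(3,4) by (simp add: length_window)
  then have "u ! (a + i + p) = u ! (a + i)"
    using assms(1-3) unfolding periodic_on_def by simp
  then show "window u (a + p) t ! i = window u a t ! i"
    using \<open>i < t\<close> assms(3,4) by (simp add: nth_window add.commute add.left_commute)
qed

lemma window_rotate_periodic:
  assumes per: "periodic_on u s e p" and "r < p" "s + r + p \<le> e + 1" "e < length u"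
  shows "window u (s + r) p = rotate r (window u s p)"
proof (rule nth_equalityI)
  show "length (window u (s + r) p) = length (rotate r (window u s p))"
    using assms(3,4) by (simp add: length_window)
  fix t assume "t < length (window u (s + r) p)"
  then have t: "t < p" using assms(3,4) by (simp add: length_window)
  have "(r + t) mod p < p" using t by simp
  have "u ! (s + r + t) = u ! (s + (r + t) mod p)"
  proof (rule periodic_on_mod[OF per])
    show "s + (r + t) mod p \<le> e" using \<open>(r + t) mod p < p\<close> assms(3) by linarith
    show "(s + r + t) mod p = (s + (r + t) mod p) mod p" by (simp add: mod_add_right_eq add.assoc)
  qed (use t assms(3) in auto)
  then show "window u (s + r) p ! t = rotate r (window u s p) ! t"
    using t assms(3,4) \<open>(r + t) mod p < p\<close> by (simp add: nth_window nth_rotate length_window)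
qed

lemma primitive_window_run0:
  assumes run: "run0 u s e p"
  shows "primitive (window u s p)"
  unfolding primitive_def
proof (intro allI impI notI)
  note r = run0D[OF run]
  define w where "w = window u s p"
  fix k assume k: "0 < k" "k < length (window u s p)" and fixed: "rotate k (window u s p) = window u s p"
  have len: "length w = p" using r(2,3) unfolding w_def by (simp add: length_window)
  have at: "u ! x = w ! ((x - s) mod p)" if "s \<le> x" "x \<le> e" for x
  proof -
    have "(x - s) mod p < p" using r(1) by simp
    moreover have "u ! x = u ! (s + (x - s) mod p)"
      by (rule periodic_on_mod[OF r(4)]) (use that r(2) \<open>(x - s) mod p < p\<close> in \<open>auto simp: mod_add_right_eq\<close>)
    ultimately show ?thesis using r(2,3) unfolding w_def by (simp add: nth_window)
  qed
  have "periodic_on u s e k"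
    unfolding periodic_on_def
  proof (intro allI impI)
    fix x assume x: "s \<le> x" "x + k \<le> e"
    have "(x - s) mod p < p" using r(1) by simp
    have "u ! (x + k) = w ! ((k + (x - s) mod p) mod p)"
      using at[of "x + k"] x by (simp add: mod_add_right_eq add.commute)
    also have "\<dots> = rotate k w ! ((x - s) mod p)"
      using \<open>(x - s) mod p < p\<close> len by (simp add: nth_rotate)
    also have "\<dots> = u ! x" using fixed at[of x] x unfolding w_def by simp
    finally show "u ! (x + k) = u ! x" .
  qed
  then show False using r(5)[of k] k len unfolding w_def by simp
qed

lemma drop_period_window_less:
  fixes u :: "'a::linorder list"
  assumes per: "periodic_on u s e p" and "1 \<le> p" "s \<le> a" "a + p \<le> e + 1" "e < length u"
    and right: "e + 1 = length u \<or> u ! (e + 1) < u ! (e + 1 - p)"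
    and "p < l" "a + l \<le> length u"
  shows "drop p (window u a l) < window u a l"
proof (cases "a + l \<le> e + 1")
  case True
  have "drop p (window u a l) = window u a (l - p)"
    using window_shift_period[OF per \<open>s \<le> a\<close>, of "l - p"] True \<open>p < l\<close> assms(5)
    by (simp add: drop_window)
  moreover have "window u a l = window u a (l - p) @ window u (a + (l - p)) p"
    using window_add[of u a "l - p" p] \<open>p < l\<close> by simp
  moreover have "window u (a + (l - p)) p \<noteq> []"
    using \<open>1 \<le> p\<close> \<open>p < l\<close> assms(8) by (simp add: window_def)
  ultimately show ?thesis
    by (metis list_less_def lexord_append_rightI neq_Nil_conv)
next
  case False
  \<comment> \<open>the first mismatch between the word and its shift by p is the letter right after the run\<close>
  define t where "t = e + 1 - a - p"
  have t: "t < l - p" "a + p + t = e + 1" "a + t = e + 1 - p"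
    using False assms(4) unfolding t_def by auto
  have "drop p (window u a l) = window u (a + p) t @ u ! (e + 1) # window u (a + p + t + 1) (l - p - t - 1)"
    using window_split[of t "l - p" "a + p" u] t assms(8) by (simp add: drop_window)
  moreover have "window u a l = window u a t @ u ! (e + 1 - p) # window u (a + t + 1) (l - t - 1)"
    using window_split[of t l a u] t assms(8) by simp
  moreover have "window u (a + p) t = window u a t"
    using window_shift_period[OF per \<open>s \<le> a\<close>] t assms(5) by simp
  moreover have "u ! (e + 1) < u ! (e + 1 - p)"
    using right False assms(8) by auto
  ultimately show ?thesis
    by (simp add: list_less_def lexord_append_left_rightI)
qed

definition longest_lyndon_at :: "'a::linorder list \<Rightarrow> nat \<Rightarrow> nat \<Rightarrow> bool" where
  "longest_lyndon_at u a p \<longleftrightarrow>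
     lyndon (window u a p) \<and> (\<forall>l > p. a + l \<le> length u \<longrightarrow> \<not> lyndon (window u a l))"

lemma longest_lyndon_at_unique:
  assumes "longest_lyndon_at u a p" "longest_lyndon_at u a q" "a + p \<le> length u" "a + q \<le> length u"
  shows "p = q"
  using assms unfolding longest_lyndon_at_def by (metis linorder_neqE_nat)

lemma run0_longest_lyndon_root:
  fixes u :: "'a::linorder list"
  assumes run: "run0 u s e p" and right: "e + 1 = length u \<or> u ! (e + 1) < u ! (e + 1 - p)"
  obtains a where "s \<le> a" "a < s + p" "longest_lyndon_at u a p"
proof -
  note r = run0D[OF run]
  have "window u s p \<noteq> []" using r(1-3) by (simp add: window_def)
  then obtain k where k: "k < length (window u s p)" "lyndon (rotate k (window u s p))"
    using lyndon_rotation_exists primitive_window_run0[OF run] by blast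
  have "k < p" using k(1) r(2,3) by (simp add: length_window)
  then have "window u (s + k) p = rotate k (window u s p)"
    using window_rotate_periodic[OF r(4)] r(2,3) by simp
  moreover have "\<not> lyndon (window u (s + k) l)" if "p < l" "s + k + l \<le> length u" for l
  proof -
    have "drop p (window u (s + k) l) < window u (s + k) l"
      by (rule drop_period_window_less[OF r(4) r(1) _ _ r(3) right that])
        (use \<open>k < p\<close> r(2) in auto)
    then show ?thesis
      using r(1) that unfolding lyndon_def by (metis length_window less_not_sym less_le_trans zero_less_one)
  qed
  ultimately have "longest_lyndon_at u (s + k) p"
    using k(2) unfolding longest_lyndon_at_def by auto
  moreover have "s \<le> s + k" "s + k < s + p" using \<open>k < p\<close> by simp_all
  ultimately show ?thesis using that by blast
qed

text \<open>Negating the letters reverses the order on bool; the flag b chooses between the two orders.\<close>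
definition lyndon_root_of_run :: "bool list \<Rightarrow> nat \<times> nat \<Rightarrow> nat \<times> bool \<Rightarrow> bool" where
  "lyndon_root_of_run u = (\<lambda>(s, e) (a, b). \<exists>p. run0 u s e p \<and> s \<le> a \<and> a < s + p \<and>
     longest_lyndon_at (if b then u else map Not u) a p)"

lemma lyndon_root_of_run_exists:
  assumes "run0 u s e p"
  shows "\<exists>a b. lyndon_root_of_run u (s, e) (a, b)"
proof (cases "e + 1 = length u \<or> u ! (e + 1) < u ! (e + 1 - p)")
  case True
  then obtain a where "s \<le> a" "a < s + p" "longest_lyndon_at u a p"
    using run0_longest_lyndon_root[OF assms] by blast
  then show ?thesis using assms unfolding lyndon_root_of_run_def by auto
next
  case False
  then have "e + 1 < length u" "u ! (e + 1) \<noteq> u ! (e + 1 - p)"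
    using assms unfolding run0_def by auto
  with False have "map Not u ! (e + 1) < map Not u ! (e + 1 - p)" by auto
  moreover have "run0 (map Not u) s e p" using assms run0_map_inj[of Not] by (simp add: inj_def)
  ultimately obtain a where "s \<le> a" "a < s + p" "longest_lyndon_at (map Not u) a p"
    using run0_longest_lyndon_root by blast
  then show ?thesis using assms unfolding lyndon_root_of_run_def by auto
qed

lemma lyndon_root_of_run_injective:
  assumes "lyndon_root_of_run u (s1, e1) (a, b)" "lyndon_root_of_run u (s2, e2) (a, b)"
  shows "s1 = s2 \<and> e1 = e2"
proof -
  let ?v = "if b then u else map Not u"
  obtain p1 p2 where run1: "run0 u s1 e1 p1" "s1 \<le> a" "a < s1 + p1" "longest_lyndon_at ?v a p1"
    and run2: "run0 u s2 e2 p2" "s2 \<le> a" "a < s2 + p2" "longest_lyndon_at ?v a p2"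
    using assms unfolding lyndon_root_of_run_def by auto
  note r1 = run0D[OF run1(1)] and r2 = run0D[OF run2(1)]
  have "p1 = p2"
    by (rule longest_lyndon_at_unique[OF run1(4) run2(4)]) (use run1(3) run2(3) r1(2,3) r2(2,3) in auto)
  then show ?thesis
    using run0_overlap_eq[OF run1(1), of s2 e2 a] run2 r1(2) r2(2) run1(2,3) by auto
qed

lemma card_runs0_le: "card (runs0 (u :: bool list)) \<le> 2 * length u"
proof -
  have "card (runs0 u) \<le> card ({..<length u} \<times> (UNIV :: bool set))"
  proof (rule card_le_card_if_injective_relation[where R = "lyndon_root_of_run u"])
    fix z assume "z \<in> runs0 u"
    then obtain s e p where z: "z = (s, e)" "run0 u s e p" unfolding runs0_def by blast
    then obtain a b where root: "lyndon_root_of_run u (s, e) (a, b)"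
      using lyndon_root_of_run_exists by blast
    then have "a < length u"
      using run0_period_unique[OF z(2)] run0D[OF z(2)] unfolding lyndon_root_of_run_def by force
    then show "\<exists>y \<in> {..<length u} \<times> UNIV. lyndon_root_of_run u z y" using root z by auto
  qed (use lyndon_root_of_run_injective in auto)
  then show ?thesis by (simp add: card_cartesian_product)
qed

section \<open>Runs of a concatenation\<close>

lemma doubling_set_card_le:
  fixes P :: "nat set"
  assumes "finite P" "P \<noteq> {}" "\<And>p. p \<in> P \<Longrightarrow> 1 \<le> p"
    and "\<And>p q. p \<in> P \<Longrightarrow> q \<in> P \<Longrightarrow> p < q \<Longrightarrow> 2 * p \<le> q"
  shows "2 ^ card P \<le> 2 * Max P"
  using assms
proof (induction P rule: finite_linorder_max_induct)
  case (insert b A)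
  show ?case
  proof (cases "A = {}")
    case True then show ?thesis using insert.prems(2) by simp
  next
    case False
    have "2 ^ card A \<le> 2 * Max A" using insert False by blast
    moreover have "2 * Max A \<le> b" using insert Max_in[OF insert.hyps(1) False] by blast
    moreover have "b \<notin> A" using insert.hyps(2) by blast
    ultimately show ?thesis using insert.hyps by (simp add: Max_insert2 less_imp_le)
  qed
qed simp

lemma run0_straddling_periods_double:
  assumes run1: "run0 u s1 e1 p" "s1 + 2 * p \<le> m" "m + 2 * p \<le> e1 + 1"
    and run2: "run0 u s2 e2 q" "s2 + 2 * q \<le> m" "m + 2 * q \<le> e2 + 1"
    and "p < q"
  shows "2 * p \<le> q"
proof (rule ccontr)
  assume "\<not> 2 * p \<le> q"
  note r1 = run0D[OF run1(1)] and r2 = run0D[OF run2(1)]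
  have "periodic_on u (m - 2 * p) (m + 2 * p - 1) p"
    using periodic_on_mono[OF r1(4)] run1(2,3) by simp
  then have "periodic_on u s2 e2 p"
    by (rule periodic_on_propagate[OF r2(4) r2(1)]) (use run2(2,3) \<open>\<not> 2 * p \<le> q\<close> \<open>p < q\<close> in auto)
  then show False using r2(5) r1(1) \<open>p < q\<close> by blast
qed

lemma card_straddling_runs0_le_log:
  assumes "1 \<le> k"
  shows "real (card {(s, e). \<exists>p. run0 u s e p \<and> s + 2 * p \<le> m \<and> m + 2 * p \<le> e + 1 \<and> 2 * p \<le> k})
    \<le> log 2 k"
    (is "real (card ?C) \<le> _")
proof -
  define straddles where "straddles s e p \<longleftrightarrow> run0 u s e p \<and> s + 2 * p \<le> m \<and> m + 2 * p \<le> e + 1 \<and> 2 * p \<le> k"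
    for s e p
  define P where "P = {p. \<exists>s e. straddles s e p}"
  have "finite P" unfolding P_def straddles_def by (rule finite_subset[of _ "{..k}"]) auto
  have card_C: "card ?C \<le> card P"
  proof (rule card_le_card_if_injective_relation[where R = "\<lambda>(s, e) p. straddles s e p"])
    show "\<And>z. z \<in> ?C \<Longrightarrow> \<exists>p\<in>P. (\<lambda>(s, e) p. straddles s e p) z p"
      unfolding P_def straddles_def by auto
    fix z z' p assume "(\<lambda>(s, e) p. straddles s e p) z p" "(\<lambda>(s, e) p. straddles s e p) z' p"
    then obtain s e s' e' where "z = (s, e)" "z' = (s', e')" "straddles s e p" "straddles s' e' p"
      by (cases z, cases z') auto
    then show "z = z'"
      using run0_overlap_eq[of u s e p s' e' "m - 2 * p"] run0D(1)[of u s e p]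
      unfolding straddles_def by auto
  qed fact
  show ?thesis
  proof (cases "P = {}")
    case True
    then show ?thesis using card_C \<open>1 \<le> k\<close> by simp
  next
    case False
    have "2 ^ card P \<le> 2 * Max P"
    proof (rule doubling_set_card_le[OF \<open>finite P\<close> False])
      show "\<And>p. p \<in> P \<Longrightarrow> 1 \<le> p" unfolding P_def straddles_def by (auto dest: run0D)
      show "\<And>p q. p \<in> P \<Longrightarrow> q \<in> P \<Longrightarrow> p < q \<Longrightarrow> 2 * p \<le> q"
        unfolding P_def straddles_def using run0_straddling_periods_double by blast
    qed
    also have "2 * Max P \<le> k"
      using Max_in[OF \<open>finite P\<close> False] unfolding P_def straddles_def by auto
    finally have "card P \<le> log 2 k" by (rule le_log2_of_power)
    then show ?thesis using card_C by linarith
  qed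
qed

lemma card_runs0_le_extensions_right:
  "card (runs0 v) \<le> card {(s, e'). \<exists>e p. run0 v s e p \<and> run0 (v @ w) s e' p}"
  (is "_ \<le> card ?L")
proof -
  let ?R = "\<lambda>(s, e) (s', e'). s' = s \<and> (\<exists>p. run0 v s e p \<and> run0 (v @ w) s e' p)"
  have "finite ?L"
    by (rule finite_subset[OF _ finite_runs0[of "v @ w"]]) (auto simp: runs0_def)
  moreover have "\<exists>y\<in>?L. ?R z y" if z: "z \<in> runs0 v" for z
  proof -
    obtain s e p where "z = (s, e)" "run0 v s e p" using z unfolding runs0_def by blast
    moreover obtain e' where "run0 (v @ w) s e' p" using run0_append_right[OF \<open>run0 v s e p\<close>] by blast
    ultimately show ?thesis by auto
  qed
  moreover have "z1 = z2" if rel: "?R z1 y" "?R z2 y" for z1 z2 y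
  proof -
    obtain s e1 e2 e' p1 p2 where "z1 = (s, e1)" "z2 = (s, e2)"
      and "run0 v s e1 p1" "run0 (v @ w) s e' p1" "run0 v s e2 p2" "run0 (v @ w) s e' p2"
      using rel by (cases z1, cases z2, cases y) auto
    moreover from this have "p1 = p2" using run0_period_unique by blast
    ultimately show "z1 = z2"
      using run0_overlap_eq[of v s e1 p1 s e2 s] run0D(1,2) by fastforce
  qed
  ultimately show ?thesis by (intro card_le_card_if_injective_relation[where R = ?R]) auto
qed

lemma card_runs0_le_extensions_left:
  "card (runs0 w) \<le> card {(s', e'). \<exists>s e p. e' = length v + e \<and> run0 w s e p \<and> run0 (v @ w) s' e' p}"
  (is "_ \<le> card ?L")
proof -
  let ?R = "\<lambda>(s, e) (s', e'). e' = length v + e \<and> (\<exists>p. run0 w s e p \<and> run0 (v @ w) s' e' p)"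
  have "finite ?L"
    by (rule finite_subset[OF _ finite_runs0[of "v @ w"]]) (auto simp: runs0_def)
  moreover have "\<exists>y\<in>?L. ?R z y" if z: "z \<in> runs0 w" for z
  proof -
    obtain s e p where "z = (s, e)" "run0 w s e p" using z unfolding runs0_def by blast
    moreover obtain s' where "run0 (v @ w) s' (length v + e) p"
      using run0_append_left[OF \<open>run0 w s e p\<close>] by blast
    ultimately show ?thesis by auto
  qed
  moreover have "z1 = z2" if rel: "?R z1 y" "?R z2 y" for z1 z2 y
  proof -
    obtain s1 s2 e s' p1 p2 where "z1 = (s1, e)" "z2 = (s2, e)"
      and "run0 w s1 e p1" "run0 (v @ w) s' (length v + e) p1"
      and "run0 w s2 e p2" "run0 (v @ w) s' (length v + e) p2"
      using rel by (cases z1, cases z2, cases y) auto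
    moreover from this have "p1 = p2" using run0_period_unique by blast
    ultimately show "z1 = z2"
      using run0_overlap_eq[of w s1 e p1 s2 e "e - p1"] run0D(1,2) by fastforce
  qed
  ultimately show ?thesis by (intro card_le_card_if_injective_relation[where R = ?R]) auto
qed

lemma card_runs0_append_le: "card (runs0 v) \<le> card (runs0 (v @ w))"
proof -
  have "{(s, e'). \<exists>e p. run0 v s e p \<and> run0 (v @ w) s e' p} \<subseteq> runs0 (v @ w)"
    unfolding runs0_def by auto
  then show ?thesis
    using card_runs0_le_extensions_right[of v w] card_mono[OF finite_runs0] by (meson le_trans)
qed

lemma card_runs0_append:
  assumes "1 \<le> length w"
  shows "real (card (runs0 v)) + real (card (runs0 w)) \<le> real (card (runs0 (v @ w))) + log 2 (length w)"
proof -
  define L where "L = {(s, e'). \<exists>e p. run0 v s e p \<and> run0 (v @ w) s e' p}"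
  define R where "R = {(s', e'). \<exists>s e p. e' = length v + e \<and> run0 w s e p \<and> run0 (v @ w) s' e' p}"
  define C where "C = {(s, e). \<exists>p. run0 (v @ w) s e p \<and> s + 2 * p \<le> length v \<and>
    length v + 2 * p \<le> e + 1 \<and> 2 * p \<le> length w}"
  have "L \<subseteq> runs0 (v @ w)" "R \<subseteq> runs0 (v @ w)" unfolding L_def R_def runs0_def by auto
  then have "finite L" "finite R" "card (L \<union> R) \<le> card (runs0 (v @ w))"
    using finite_runs0 finite_subset card_mono by (metis le_sup_iff)+
  \<comment> \<open>a run of v@w extending both a run of v and a run of w straddles the border\<close>
  have "L \<inter> R \<subseteq> C"
  proof (clarify)
    fix s e' assume "(s, e') \<in> L" "(s, e') \<in> R"
    then obtain e1 s2 e2 p q where "run0 v s e1 p" "run0 (v @ w) s e' p"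
      and "e' = length v + e2" "run0 w s2 e2 q" "run0 (v @ w) s e' q"
      unfolding L_def R_def by blast
    moreover from this have "p = q" using run0_period_unique by blast
    ultimately show "(s, e') \<in> C"
      using run0D(2,3)[of v s e1 p] run0D(2,3)[of w s2 e2 q] unfolding C_def by auto
  qed
  then have "card (L \<inter> R) \<le> card C"
    by (rule card_mono[rotated]) (rule finite_subset[OF _ finite_runs0], auto simp: C_def runs0_def)
  moreover have "real (card C) \<le> log 2 (length w)"
    unfolding C_def using card_straddling_runs0_le_log[OF assms] .
  moreover have "card (runs0 v) \<le> card L" "card (runs0 w) \<le> card R"
    unfolding L_def R_def using card_runs0_le_extensions_right card_runs0_le_extensions_left .
  moreover have "card L + card R = card (L \<union> R) + card (L \<inter> R)"
    using card_Un_Int[OF \<open>finite L\<close> \<open>finite R\<close>] .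
  ultimately show ?thesis using \<open>card (L \<union> R) \<le> card (runs0 (v @ w))\<close> by linarith
qed

section \<open>Runs as defined by is_run\<close>

lemma is_period_factor_iff:
  assumes "1 \<le> i" "i < j" "j \<le> length w"
  shows "is_period (factor w i j) q \<longleftrightarrow> 1 \<le> q \<and> periodic_on w (i - 1) (j - 1) q"
proof -
  have len: "length (factor w i j) = j + 1 - i" using assms by (simp add: factor_def)
  have letter: "letter (factor w i j) t = w ! (i + t - 2)" if "1 \<le> t" "t \<le> j + 1 - i" for t
    using assms that unfolding letter_def factor_def by (simp add: numeral_2_eq_2)
  have "(\<forall>t. 1 \<le> t \<and> t \<le> j + 1 - i - q \<longrightarrow> w ! (i + (t + q) - 2) = w ! (i + t - 2)) \<longleftrightarrow>
      periodic_on w (i - 1) (j - 1) q" (is "?shifted \<longleftrightarrow> _")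
    unfolding periodic_on_def
  proof
    assume shifted: ?shifted
    show "\<forall>x. i - 1 \<le> x \<longrightarrow> x + q \<le> j - 1 \<longrightarrow> w ! (x + q) = w ! x"
    proof (intro allI impI)
      fix x assume "i - 1 \<le> x" "x + q \<le> j - 1"
      then have "1 \<le> x + 2 - i \<and> x + 2 - i \<le> j + 1 - i - q" using assms by auto
      then have "w ! (i + (x + 2 - i + q) - 2) = w ! (i + (x + 2 - i) - 2)"
        using shifted by blast
      moreover have "i + (x + 2 - i + q) - 2 = x + q" "i + (x + 2 - i) - 2 = x"
        using \<open>i - 1 \<le> x\<close> by auto
      ultimately show "w ! (x + q) = w ! x" by metis
    qed
  next
    assume per: "\<forall>x. i - 1 \<le> x \<longrightarrow> x + q \<le> j - 1 \<longrightarrow> w ! (x + q) = w ! x"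
    show ?shifted
    proof (intro allI impI)
      fix t assume t: "1 \<le> t \<and> t \<le> j + 1 - i - q"
      then have "i - 1 \<le> i + t - 2" "i + t - 2 + q \<le> j - 1" using assms by auto
      then have "w ! (i + t - 2 + q) = w ! (i + t - 2)" using per by blast
      moreover have "i + (t + q) - 2 = i + t - 2 + q" using t assms(1) by linarith
      ultimately show "w ! (i + (t + q) - 2) = w ! (i + t - 2)" by metis
    qed
  qed
  then show ?thesis
    unfolding is_period_def len using letter by auto
qed

lemma least_period_factor_eq:
  assumes "s < e" "e < length w" "periodic_on w s e p" "1 \<le> p"
    and "\<And>q. 1 \<le> q \<Longrightarrow> q < p \<Longrightarrow> \<not> periodic_on w s e q"
  shows "least_period (factor w (Suc s) (Suc e)) = p"
  unfolding least_period_def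
proof (rule Least_equality)
  show "is_period (factor w (Suc s) (Suc e)) p" using assms by (simp add: is_period_factor_iff)
  show "p \<le> q" if "is_period (factor w (Suc s) (Suc e)) q" for q
    using that assms by (simp add: is_period_factor_iff) (meson not_le)
qed

lemma is_run_Suc_iff: "is_run w (Suc s) (Suc e) \<longleftrightarrow> (\<exists>p. run0 w s e p)"
proof
  assume run: "is_run w (Suc s) (Suc e)"
  then have se: "s < e" "e < length w" by (simp_all add: is_run_def)
  define p where "p = least_period (factor w (Suc s) (Suc e))"
  have "periodic_on w s e (e + 1 - s)" unfolding periodic_on_def by auto
  then have "is_period (factor w (Suc s) (Suc e)) (e + 1 - s)"
    using se by (simp add: is_period_factor_iff)
  then have "is_period (factor w (Suc s) (Suc e)) p"
    unfolding p_def least_period_def by (rule LeastI)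
  moreover have "\<not> is_period (factor w (Suc s) (Suc e)) q" if "q < p" for q
    using that unfolding p_def least_period_def by (rule not_less_Least)
  ultimately have "periodic_on w s e p" "1 \<le> p" "\<And>q. 1 \<le> q \<Longrightarrow> q < p \<Longrightarrow> \<not> periodic_on w s e q"
    using se by (simp_all add: is_period_factor_iff)
  moreover have "2 * p \<le> e - s + 1" "s = 0 \<or> letter w s \<noteq> letter w (s + p)"
    "Suc e = length w \<or> letter w (e + 2) \<noteq> letter w (e + 2 - p)"
    using run unfolding is_run_def Let_def p_def by simp_all
  then have "s + 2 * p \<le> e + 1"
    "s = 0 \<or> w ! (s - 1) \<noteq> w ! (s - 1 + p)" "e + 1 = length w \<or> w ! (e + 1) \<noteq> w ! (e + 1 - p)"
    using \<open>1 \<le> p\<close> \<open>s < e\<close> unfolding letter_def by (auto simp: Suc_diff_le)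
  ultimately show "\<exists>p. run0 w s e p" using se unfolding run0_def by blast
next
  assume "\<exists>p. run0 w s e p"
  then obtain p where run: "run0 w s e p" by blast
  note r = run0D[OF run]
  have "s < e" using r(1,2) by simp
  then have "least_period (factor w (Suc s) (Suc e)) = p"
    using least_period_factor_eq r by blast
  moreover have "s = 0 \<or> letter w s \<noteq> letter w (s + p)"
    "Suc e = length w \<or> letter w (e + 2) \<noteq> letter w (e + 2 - p)"
    using run r(1,2) unfolding run0_def letter_def by (auto simp: Suc_diff_le)
  ultimately show "is_run w (Suc s) (Suc e)"
    using r(2,3) \<open>s < e\<close> unfolding is_run_def Let_def by simp
qed

lemma card_runs_eq_card_runs0: "card (runs w) = card (runs0 w)"
proof -
  have "runs w = (\<lambda>(s, e). (Suc s, Suc e)) ` runs0 w"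
  proof (intro equalityI subsetI)
    fix z assume "z \<in> runs w"
    then obtain i j where "z = (i, j)" "is_run w i j" unfolding runs_def by blast
    moreover from this have "i = Suc (i - 1)" "j = Suc (j - 1)" unfolding is_run_def by auto
    moreover have "(i - 1, j - 1) \<in> runs0 w"
      using calculation is_run_Suc_iff[of w "i - 1" "j - 1"] unfolding runs0_def by simp
    ultimately show "z \<in> (\<lambda>(s, e). (Suc s, Suc e)) ` runs0 w"
      by (metis (no_types, lifting) case_prod_conv rev_image_eqI)
  next
    fix z assume "z \<in> (\<lambda>(s, e). (Suc s, Suc e)) ` runs0 w"
    then show "z \<in> runs w" unfolding runs_def runs0_def using is_run_Suc_iff by auto
  qed
  moreover have "inj_on (\<lambda>(s, e). (Suc s, Suc e)) (runs0 w)" by (rule inj_onI) auto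
  ultimately show ?thesis by (simp add: card_image)
qed

section \<open>Nearly superadditive sequences\<close>

lemma nearly_superadditive_multiple:
  fixes f g :: "nat \<Rightarrow> real"
  assumes "0 \<le> f 0" and super: "\<And>a b. 1 \<le> b \<Longrightarrow> f a + f b \<le> f (a + b) + g b" and "1 \<le> n"
  shows "real k * (f n - g n) \<le> f (k * n)"
proof (induction k)
  case (Suc k)
  have "f (k * n) + f n \<le> f (k * n + n) + g n" using super \<open>1 \<le> n\<close> .
  with Suc.IH show ?case by (simp add: algebra_simps)
qed (use assms in simp)

lemma nearly_superadditive_lower_bound:
  fixes f g :: "nat \<Rightarrow> real"
  assumes "0 \<le> f 0" and "mono f" and "\<And>a b. 1 \<le> b \<Longrightarrow> f a + f b \<le> f (a + b) + g b"
    and "1 \<le> n"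
  defines "c \<equiv> (f n - g n) / real n"
  shows "real N * c - real n * \<bar>c\<bar> \<le> f N"
proof -
  define k d where "k = N div n" and "d = N mod n"
  have N: "N = k * n + d" and "d < n" using \<open>1 \<le> n\<close> by (simp_all add: k_def d_def)
  have "real k * real n * c \<le> f (k * n)"
    using nearly_superadditive_multiple[OF assms(1,3,4), of k] \<open>1 \<le> n\<close> by (simp add: c_def)
  also have "\<dots> \<le> f N" using \<open>mono f\<close> N by (simp add: monoD)
  finally have "real N * c - real d * c \<le> f N" by (simp add: N algebra_simps)
  moreover have "real d * c \<le> real n * \<bar>c\<bar>"
    using \<open>d < n\<close> by (smt (verit) abs_ge_self mult_left_mono mult_right_mono of_nat_0_le_iff of_nat_less_iff)
  ultimately show ?thesis by linarith
qed

lemma nearly_superadditive_ratio_tendsto: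
  fixes f g :: "nat \<Rightarrow> real"
  assumes nonneg: "\<And>n. 0 \<le> f n" and mono: "mono f" and bound: "\<And>n. f n \<le> C * real n"
    and super: "\<And>a b. 1 \<le> b \<Longrightarrow> f a + f b \<le> f (a + b) + g b"
    and g_small: "(\<lambda>n. g n / real n) \<longlonglongrightarrow> 0"
  shows "(\<lambda>n. f n / real n) \<longlonglongrightarrow> (SUP n\<in>{1..}. (f n - g n) / real n)"
    (is "_ \<longlonglongrightarrow> ?A")
proof -
  define c where "c n = (f n - g n) / real n" for n
  have "c n \<le> C" if "1 \<le> n" for n
  proof -
    have "0 \<le> g n" using super[of n 0] nonneg[of 0] that by simp
    then show ?thesis using bound[of n] that by (simp add: c_def divide_le_eq)
  qed
  then have bdd: "bdd_above (c ` {1..})" by (intro bdd_aboveI2[of _ _ C]) simp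
  have ratio: "f n / real n = c n + g n / real n" if "1 \<le> n" for n
    using that by (simp add: c_def diff_divide_distrib)
  show ?thesis
  proof (rule order_tendstoI)
    fix a assume "?A < a"
    have le_sup: "c n \<le> ?A" if "1 \<le> n" for n
      using cSUP_upper[OF _ bdd] that by (simp add: c_def)
    have "\<forall>\<^sub>F n in sequentially. g n / real n < a - ?A"
      using order_tendstoD(2)[OF g_small] \<open>?A < a\<close> by simp
    then show "\<forall>\<^sub>F n in sequentially. f n / real n < a"
      using eventually_ge_at_top[of 1] by eventually_elim (use ratio le_sup in fastforce)
  next
    fix a assume "a < ?A"
    then obtain n where n: "1 \<le> n" "a < c n"
      using less_cSUP_iff[OF _ bdd] by (auto simp: c_def)
    have lim: "(\<lambda>N. c n - real n * \<bar>c n\<bar> / real N) \<longlonglongrightarrow> c n - 0"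
      by (intro tendsto_diff tendsto_const lim_const_over_n)
    have lower: "c n - real n * \<bar>c n\<bar> / real N \<le> f N / real N" if "1 \<le> N" for N
      using divide_right_mono[OF nearly_superadditive_lower_bound[OF nonneg mono super n(1)], of "real N" N]
        that by (simp add: c_def diff_divide_distrib)
    have "\<forall>\<^sub>F N in sequentially. a < c n - real n * \<bar>c n\<bar> / real N"
      using order_tendstoD(1)[OF lim] n(2) by simp
    then show "\<forall>\<^sub>F N in sequentially. a < f N / real N"
      using eventually_ge_at_top[of 1] by eventually_elim (use lower in fastforce)
  qed
qed

section \<open>The maximal number of runs\<close>

lemma finite_words_of_length: "finite {w :: bool list. length w = n}"
  using finite_lists_length_eq[of "UNIV :: bool set" n] by simp

lemma card_runs0_le_rho: "length (w :: bool list) = n \<Longrightarrow> card (runs0 w) \<le> rho n"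
  unfolding rho_def card_runs_eq_card_runs0[symmetric]
  by (rule Max_ge) (use finite_words_of_length in auto)

lemma rho_attained: "\<exists>w :: bool list. length w = n \<and> rho n = card (runs0 w)"
proof -
  have "{w :: bool list. length w = n} \<noteq> {}" by (metis (mono_tags) empty_iff length_replicate mem_Collect_eq)
  then have "rho n \<in> (\<lambda>w. card (runs w)) ` {w. length w = n}"
    unfolding rho_def using finite_words_of_length by (intro Max_in) auto
  then show ?thesis using card_runs_eq_card_runs0 by auto
qed

lemma rho_le: "rho n \<le> 2 * n"
  using rho_attained[of n] card_runs0_le by metis

lemma mono_rho: "mono rho"
proof
  fix a b :: nat assume "a \<le> b"
  obtain w :: "bool list" where w: "length w = a" "rho a = card (runs0 w)" using rho_attained by blast
  have "card (runs0 w) \<le> card (runs0 (w @ replicate (b - a) False))" by (rule card_runs0_append_le)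
  also have "\<dots> \<le> rho b" using w \<open>a \<le> b\<close> by (intro card_runs0_le_rho) simp
  finally show "rho a \<le> rho b" using w by simp
qed

lemma rho_nearly_superadditive:
  assumes "1 \<le> b"
  shows "real (rho a) + real (rho b) \<le> real (rho (a + b)) + log 2 (real b)"
proof -
  obtain v w :: "bool list" where v: "length v = a" "rho a = card (runs0 v)"
    and w: "length w = b" "rho b = card (runs0 w)"
    using rho_attained by metis
  have "card (runs0 (v @ w)) \<le> rho (a + b)" using v w by (intro card_runs0_le_rho) simp
  then show ?thesis using card_runs0_append[of w v] assms v w by simp
qed

lemma log_over_real_tendsto_0: "(\<lambda>n. log b (real n) / real n) \<longlonglongrightarrow> 0"
proof -
  have "(\<lambda>n. ln (real n) / real n) \<longlonglongrightarrow> 0"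
    using filterlim_compose[OF ln_x_over_x_tendsto_0 filterlim_real_sequentially] by simp
  then have "(\<lambda>n. (ln (real n) / real n) / ln b) \<longlonglongrightarrow> 0"
    by (rule tendsto_divide_zero)
  then show ?thesis by (simp add: log_def mult.commute)
qed

theorem mainTheorem2:
  shows "\<exists>L :: real. (\<lambda>n. real (rho n) / real n) \<longlonglongrightarrow> L"
proof
  show "(\<lambda>n. real (rho n) / real n) \<longlonglongrightarrow> (SUP n\<in>{1..}. (real (rho n) - log 2 (real n)) / real n)"
  proof (rule nearly_superadditive_ratio_tendsto[where C = 2])
    show "mono (\<lambda>n. real (rho n))" using mono_rho by (simp add: mono_def)
    show "real (rho n) \<le> 2 * real n" for n using rho_le[of n] by linarith
  qed (use rho_nearly_superadditive log_over_real_tendsto_0 in auto)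
qed

end
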